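(* Let $\mathfrak{N}_1$ and $\mathfrak{N}_2$ be von Neumann algebras on a Hilbert space $\mathcal{H}$ such that $\mathfrak{N}_1 \subseteq \mathfrak{N}_2'$, and let $\omega$ be a normal state of $\mathfrak{N}_1 \vee \mathfrak{N}_2$. If $\omega$ is an EPR state for incommensurable pairs, then $\omega$ is Bell correlated.
   Context: $\mathfrak{N}'$ denotes the commutant, $\mathfrak{N}_1 \vee \mathfrak{N}_2$ the von Neumann algebra generated by $\mathfrak{N}_1$ and $\mathfrak{N}_2$, $[X,Y] = XY - YX$, $|X|^2 = X^*X$. A self-adjoint contraction is a self-adjoint $X$ with $-I \le X \le I$. For commuting self-adjoint operators $A_1, A_2$, a normal state $\omega$ is an EPR state for $(A_1, A_2)$ if $\omega((A_1 - A_2)^2) = 0$. A normal state $\omega$ of $\mathfrak{N}_1 \vee \mathfrak{N}_2$ is an EPR state for incommensurable pairs if there exist projections $E_1, F_1 \in \mathfrak{N}_1$ and $E_2, F_2 \in \mathfrak{N}_2$ such that $\omega$ is an EPR state for $(E_1,E_2)$ and for $(F_1,F_2)$, $\omega(|[E_1,F_1]|^2) \neq 0$, and $\omega(|[E_2,F_2]|^2) \neq 0$. The state $\omega$ is Bell correlated (violates a Bell inequality) if there exist self-adjoint contractions $A_1, B_1 \in \mathfrak{N}_1$ and $A_2, B_2 \in \mathfrak{N}_2$ such that $\frac{1}{2}\,|\omega(A_1A_2 + A_1B_2 + B_1A_2 - B_1B_2)| > 1$. *)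

theory Defs
  imports Complex_Main
begin

class complex_vector_space = ab_group_add +
  fixes scaleC :: "complex \<Rightarrow> 'a \<Rightarrow> 'a"
  assumes scaleC_add_right: "scaleC a (x + y) = scaleC a x + scaleC a y"
    and scaleC_add_left: "scaleC (a + b) x = scaleC a x + scaleC b x"
    and scaleC_scaleC: "scaleC a (scaleC b x) = scaleC (a * b) x"
    and scaleC_one: "scaleC 1 x = x"

class complex_inner_space = complex_vector_space +
  fixes cinner :: "'a \<Rightarrow> 'a \<Rightarrow> complex"
  assumes cinner_add_right: "cinner x (y + z) = cinner x y + cinner x z"
    and cinner_scaleC_right: "cinner x (scaleC a y) = a * cinner x y"
    and cinner_commute: "cinner y x = cnj (cinner x y)"
    and cinner_self_nonneg: "Im (cinner x x) = 0 \<and> 0 \<le> Re (cinner x x)"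
    and cinner_self_eq_zero: "cinner x x = 0 \<Longrightarrow> x = 0"

definition cnorm :: "'a::complex_inner_space \<Rightarrow> real" where
  "cnorm x = sqrt (Re (cinner x x))"

class chilbert_space = complex_inner_space +
  assumes cauchy_complete:
    "\<forall>e>0. \<exists>N::nat. \<forall>m\<ge>N. \<forall>n\<ge>N. sqrt (Re (cinner ((X::nat \<Rightarrow> 'a) m - X n) (X m - X n))) < e
     \<Longrightarrow> \<exists>L. \<forall>e>0. \<exists>N::nat. \<forall>n\<ge>N. sqrt (Re (cinner (X n - L) (X n - L))) < e"

type_synonym 'h op = "'h \<Rightarrow> 'h"

definition bounded_op :: "'h::chilbert_space op \<Rightarrow> bool" where
  "bounded_op A \<longleftrightarrow> (\<forall>x y. A (x + y) = A x + A y) \<and> (\<forall>c x. A (scaleC c x) = scaleC c (A x))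
     \<and> (\<exists>K. \<forall>x. cnorm (A x) \<le> K * cnorm x)"

definition adj :: "'h::chilbert_space op \<Rightarrow> 'h op" where
  "adj A = (THE B. \<forall>x y. cinner (A x) y = cinner x (B y))"

definition op_plus :: "'h::chilbert_space op \<Rightarrow> 'h op \<Rightarrow> 'h op" where
  "op_plus A B = (\<lambda>x. A x + B x)"

definition op_minus :: "'h::chilbert_space op \<Rightarrow> 'h op \<Rightarrow> 'h op" where
  "op_minus A B = (\<lambda>x. A x - B x)"

definition op_scale :: "complex \<Rightarrow> 'h::chilbert_space op \<Rightarrow> 'h op" where
  "op_scale c A = (\<lambda>x. scaleC c (A x))"

definition op_zero :: "'h::chilbert_space op" where
  "op_zero = (\<lambda>x. 0)"

definition commutator :: "'h::chilbert_space op \<Rightarrow> 'h op \<Rightarrow> 'h op" where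
  "commutator X Y = op_minus (X \<circ> Y) (Y \<circ> X)"

definition abs_sq :: "'h::chilbert_space op \<Rightarrow> 'h op" where
  "abs_sq X = adj X \<circ> X"

definition op_le :: "'h::chilbert_space op \<Rightarrow> 'h op \<Rightarrow> bool" where
  "op_le A B \<longleftrightarrow> (\<forall>x. Im (cinner x (B x - A x)) = 0 \<and> 0 \<le> Re (cinner x (B x - A x)))"

definition self_adjoint :: "'h::chilbert_space op \<Rightarrow> bool" where
  "self_adjoint A \<longleftrightarrow> bounded_op A \<and> adj A = A"

definition projection :: "'h::chilbert_space op \<Rightarrow> bool" where
  "projection E \<longleftrightarrow> self_adjoint E \<and> E \<circ> E = E"

definition sa_contraction :: "'h::chilbert_space op \<Rightarrow> bool" where
  "sa_contraction X \<longleftrightarrow> self_adjoint X \<and> op_le (op_scale (-1) id) X \<and> op_le X id"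

definition commutant :: "'h::chilbert_space op set \<Rightarrow> 'h op set" where
  "commutant S = {B. bounded_op B \<and> (\<forall>A\<in>S. A \<circ> B = B \<circ> A)}"

text \<open>A von Neumann algebra: a self-adjoint set of bounded operators equal to its
  double commutant (equivalently, by the bicommutant theorem, a unital *-algebra closed
  in the weak operator topology).\<close>
definition von_neumann_algebra :: "'h::chilbert_space op set \<Rightarrow> bool" where
  "von_neumann_algebra M \<longleftrightarrow> M \<subseteq> {A. bounded_op A} \<and> (\<forall>A\<in>M. adj A \<in> M)
     \<and> commutant (commutant M) = M"

definition vN_join :: "'h::chilbert_space op set \<Rightarrow> 'h op set \<Rightarrow> 'h op set" where
  "vN_join N1 N2 = commutant (commutant (N1 \<union> N2))"

definition is_state :: "'h::chilbert_space op set \<Rightarrow> ('h op \<Rightarrow> complex) \<Rightarrow> bool" where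
  "is_state M \<omega> \<longleftrightarrow>
     (\<forall>A\<in>M. \<forall>B\<in>M. \<omega> (op_plus A B) = \<omega> A + \<omega> B)
   \<and> (\<forall>c. \<forall>A\<in>M. \<omega> (op_scale c A) = c * \<omega> A)
   \<and> (\<forall>A\<in>M. Im (\<omega> (adj A \<circ> A)) = 0 \<and> 0 \<le> Re (\<omega> (adj A \<circ> A)))
   \<and> \<omega> id = 1"

definition op_directed :: "'h::chilbert_space op set \<Rightarrow> bool" where
  "op_directed D \<longleftrightarrow> (\<forall>A\<in>D. \<forall>B\<in>D. \<exists>C\<in>D. op_le A C \<and> op_le B C)"

definition is_op_lub :: "'h::chilbert_space op set \<Rightarrow> 'h op \<Rightarrow> bool" where
  "is_op_lub D A \<longleftrightarrow> self_adjoint A \<and> (\<forall>B\<in>D. op_le B A)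
     \<and> (\<forall>C. self_adjoint C \<and> (\<forall>B\<in>D. op_le B C) \<longrightarrow> op_le A C)"

definition normal_functional :: "'h::chilbert_space op set \<Rightarrow> ('h op \<Rightarrow> complex) \<Rightarrow> bool" where
  "normal_functional M \<omega> \<longleftrightarrow>
     (\<forall>D A. D \<noteq> {} \<and> D \<subseteq> M \<and> op_directed D \<and> (\<forall>B\<in>D. op_le op_zero B) \<and> is_op_lub D A
        \<longrightarrow> \<omega> A = complex_of_real (SUP B\<in>D. Re (\<omega> B)))"

definition normal_state :: "'h::chilbert_space op set \<Rightarrow> ('h op \<Rightarrow> complex) \<Rightarrow> bool" where
  "normal_state M \<omega> \<longleftrightarrow> is_state M \<omega> \<and> normal_functional M \<omega>"

definition EPR_state_for :: "('h::chilbert_space op \<Rightarrow> complex) \<Rightarrow> 'h op \<Rightarrow> 'h op \<Rightarrow> bool" where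
  "EPR_state_for \<omega> A1 A2 \<longleftrightarrow> \<omega> (op_minus A1 A2 \<circ> op_minus A1 A2) = 0"

definition EPR_incommensurable ::
  "'h::chilbert_space op set \<Rightarrow> 'h op set \<Rightarrow> ('h op \<Rightarrow> complex) \<Rightarrow> bool" where
  "EPR_incommensurable N1 N2 \<omega> \<longleftrightarrow>
     (\<exists>E1\<in>N1. \<exists>F1\<in>N1. \<exists>E2\<in>N2. \<exists>F2\<in>N2.
        projection E1 \<and> projection F1 \<and> projection E2 \<and> projection F2
      \<and> EPR_state_for \<omega> E1 E2 \<and> EPR_state_for \<omega> F1 F2
      \<and> \<omega> (abs_sq (commutator E1 F1)) \<noteq> 0
      \<and> \<omega> (abs_sq (commutator E2 F2)) \<noteq> 0)"

definition Bell_correlated ::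
  "'h::chilbert_space op set \<Rightarrow> 'h op set \<Rightarrow> ('h op \<Rightarrow> complex) \<Rightarrow> bool" where
  "Bell_correlated N1 N2 \<omega> \<longleftrightarrow>
     (\<exists>A1\<in>N1. \<exists>B1\<in>N1. \<exists>A2\<in>N2. \<exists>B2\<in>N2.
        sa_contraction A1 \<and> sa_contraction B1 \<and> sa_contraction A2 \<and> sa_contraction B2
      \<and> cmod (\<omega> (op_minus (op_plus (op_plus (A1 \<circ> A2) (A1 \<circ> B2)) (B1 \<circ> A2)) (B1 \<circ> B2))) / 2 > 1)"

end

theory Submission
  imports Defs
begin

text \<open>Write \<open>p, q\<close> and \<open>p', q'\<close> for the projections \<open>E\<^sub>1, F\<^sub>1\<close> and \<open>E\<^sub>2, F\<^sub>2\<close>, and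
  \<open>u = 2p - 1\<close>, \<open>v = 2q - 1\<close>, \<open>u' = 2p' - 1\<close>, \<open>v' = 2q' - 1\<close> for the associated self-adjoint
  unitaries. By the Cauchy--Schwarz inequality for \<open>\<omega>\<close>, \<open>\<omega>((p - p')\<^sup>2) = 0\<close> forces
  \<open>\<omega>((p - p') z) = 0\<close> for every \<open>z\<close>, so in products \<open>u' \<pm> v'\<close> may be replaced by \<open>u \<pm> v\<close>.
  Choose \<open>A\<^sub>1 = u\<close>, \<open>B\<^sub>1 = v\<close>, \<open>A\<^sub>2 = f(u' + v')\<close>, \<open>B\<^sub>2 = f(u' - v')\<close> with
  \<open>f(t) = 3t/4 - t\<^sup>3/16\<close>, which maps \<open>[-4, 4]\<close> into \<open>[-1, 1]\<close>. Since the two sides commute,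
  the CHSH expression becomes \<open>\<omega>(f(s) s + f(d) d)\<close> with \<open>s = u + v\<close>, \<open>d = u - v\<close>, and the
  identity \<open>f(s) s + f(d) d = 2 + 2 |[p, q]|\<^sup>2\<close> gives the value \<open>2 + 2 \<omega>(|[p, q]|\<^sup>2) > 2\<close>.

  The adjoint is defined by a description, so its existence for bounded operators has to be
  proved; this is where completeness enters, through the Riesz representation theorem.\<close>

lemma scaleC_zero_left [simp]: "scaleC 0 (x::'a::complex_vector_space) = 0"
proof -
  have "scaleC (0 + 0) x = scaleC 0 x + scaleC 0 x" by (rule scaleC_add_left)
  thus ?thesis by simp
qed

lemma scaleC_zero_right [simp]: "scaleC a (0::'a::complex_vector_space) = 0"
proof -
  have "scaleC a (0 + 0::'a) = scaleC a 0 + scaleC a 0" by (rule scaleC_add_right)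
  thus ?thesis by simp
qed

lemma scaleC_minus_right: "scaleC a (- x) = - scaleC a (x::'a::complex_vector_space)"
  using scaleC_add_right[of a x "- x"] by (simp add: eq_neg_iff_add_eq_0 add.commute)

lemma scaleC_diff_right: "scaleC a (x - y) = scaleC a x - scaleC a (y::'a::complex_vector_space)"
  using scaleC_add_right[of a x "- y"] by (simp add: scaleC_minus_right)

lemma scaleC_minus_left: "scaleC (- a) x = - scaleC a (x::'a::complex_vector_space)"
  using scaleC_add_left[of a "- a" x] by (simp add: eq_neg_iff_add_eq_0 add.commute)

lemma scaleC_minus1: "scaleC (- 1) x = - (x::'a::complex_vector_space)"
  by (simp add: scaleC_minus_left scaleC_one)

lemma cinner_zero_right [simp]: "cinner (x::'a::complex_inner_space) 0 = 0"
  using cinner_add_right[of x 0 0] by simp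

lemma cinner_zero_left [simp]: "cinner 0 (x::'a::complex_inner_space) = 0"
  by (subst cinner_commute) simp

lemma cinner_minus_right: "cinner x (- y) = - cinner x (y::'a::complex_inner_space)"
  using cinner_add_right[of x y "- y"] by (simp add: eq_neg_iff_add_eq_0 add.commute)

lemma cinner_diff_right: "cinner x (y - z) = cinner x y - cinner x (z::'a::complex_inner_space)"
  using cinner_add_right[of x y "- z"] by (simp add: cinner_minus_right)

lemma cinner_add_left: "cinner (x + y) z = cinner x z + cinner y (z::'a::complex_inner_space)"
  by (subst (1 2 3) cinner_commute) (simp add: cinner_add_right)

lemma cinner_scaleC_left: "cinner (scaleC a x) y = cnj a * cinner x (y::'a::complex_inner_space)"
  by (subst (1 2) cinner_commute) (simp add: cinner_scaleC_right)

lemma cinner_diff_left: "cinner (x - y) z = cinner x z - cinner y (z::'a::complex_inner_space)"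
  by (subst (1 2 3) cinner_commute) (simp add: cinner_diff_right)

lemma cinner_self_Im [simp]: "Im (cinner x (x::'a::complex_inner_space)) = 0"
  using cinner_self_nonneg[of x] by auto

lemma cinner_self_Re_nonneg: "0 \<le> Re (cinner x (x::'a::complex_inner_space))"
  using cinner_self_nonneg[of x] by auto

lemma cinner_self_real: "cinner x x = complex_of_real (Re (cinner x (x::'a::complex_inner_space)))"
  by (simp add: complex_eq_iff)

lemma cinner_self_eq_zero_iff: "cinner x x = 0 \<longleftrightarrow> (x::'a::complex_inner_space) = 0"
  using cinner_self_eq_zero by auto

lemma cinner_ext: "(\<And>x. cinner x a = cinner x b) \<Longrightarrow> a = (b::'a::complex_inner_space)"
  by (metis cinner_diff_right cinner_self_eq_zero_iff right_minus_eq)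

lemma cnorm_nonneg: "0 \<le> cnorm x"
  by (simp add: cnorm_def cinner_self_Re_nonneg)

lemma cnorm_power2: "(cnorm x)\<^sup>2 = Re (cinner x x)"
  by (simp add: cnorm_def cinner_self_Re_nonneg)

lemma cnorm_zero [simp]: "cnorm 0 = 0"
  by (simp add: cnorm_def)

lemma cnorm_minus_commute: "cnorm (x - y) = cnorm (y - x)"
  by (simp add: cnorm_def cinner_diff_left cinner_diff_right)

lemma scaleC_2: "scaleC 2 x = x + (x::'a::complex_vector_space)"
  using scaleC_add_left[of 1 1 x] by (simp add: scaleC_one)

lemma cnorm_scaleC: "cnorm (scaleC c x) = cmod c * cnorm x"
proof -
  have "cinner (scaleC c x) (scaleC c x) = (cnj c * c) * cinner x x"
    by (simp add: cinner_scaleC_left cinner_scaleC_right)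
  also have "cnj c * c = complex_of_real ((cmod c)\<^sup>2)"
    using complex_norm_square[of c] by (simp add: mult.commute)
  finally have "Re (cinner (scaleC c x) (scaleC c x)) = (cmod c)\<^sup>2 * Re (cinner x x)"
    by simp
  thus ?thesis by (simp add: cnorm_def real_sqrt_mult)
qed

lemma Cauchy_Schwarz_power2: "(cmod (cinner x y))\<^sup>2 \<le> Re (cinner x x) * Re (cinner y y)"
proof (cases "x = 0")
  case True thus ?thesis by simp
next
  case False
  define r where "r = Re (cinner x x)"
  define b where "b = cinner x y"
  have xx: "cinner x x = complex_of_real r" unfolding r_def by (rule cinner_self_real)
  have r: "r > 0"
    using False cinner_self_Re_nonneg[of x] xx cinner_self_eq_zero_iff
    unfolding r_def by (metis less_eq_real_def of_real_0)
  \<comment> \<open>expand \<open>0 \<le> \<langle>z, z\<rangle>\<close> for the residual \<open>z\<close> of \<open>y\<close> after projecting onto \<open>x\<close>\<close>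
  define t where "t = b / complex_of_real r"
  define z where "z = y - scaleC t x"
  have "cinner z z = cinner y y - t * cnj b - cnj t * b + cnj t * t * complex_of_real r"
    unfolding z_def
    by (simp add: cinner_diff_left cinner_diff_right cinner_scaleC_left cinner_scaleC_right
        cinner_commute[of y x] xx b_def algebra_simps)
  also have "\<dots> = cinner y y - complex_of_real ((cmod b)\<^sup>2 / r)"
    unfolding t_def using r complex_norm_square[of b] by (simp add: field_simps)
  finally have "(cmod b)\<^sup>2 / r \<le> Re (cinner y y)"
    using cinner_self_Re_nonneg[of z] by simp
  thus ?thesis using r by (simp add: pos_divide_le_eq mult.commute r_def b_def)
qed

lemma Cauchy_Schwarz: "cmod (cinner x y) \<le> cnorm x * cnorm y"
proof -
  have "(cmod (cinner x y))\<^sup>2 \<le> (cnorm x * cnorm y)\<^sup>2"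
    using Cauchy_Schwarz_power2[of x y] by (simp add: power_mult_distrib cnorm_power2)
  thus ?thesis by (rule power2_le_imp_le) (simp add: cnorm_nonneg)
qed

lemma cnorm_triangle: "cnorm (x + y) \<le> cnorm x + cnorm y"
proof -
  have "(cnorm (x + y))\<^sup>2 = (cnorm x)\<^sup>2 + (cnorm y)\<^sup>2 + 2 * Re (cinner x y)"
    by (simp add: cnorm_power2 cinner_add_left cinner_add_right cinner_commute[of y x])
  also have "\<dots> \<le> (cnorm x)\<^sup>2 + (cnorm y)\<^sup>2 + 2 * (cnorm x * cnorm y)"
    using Cauchy_Schwarz[of x y] complex_Re_le_cmod[of "cinner x y"] by simp
  also have "\<dots> = (cnorm x + cnorm y)\<^sup>2" by (simp add: power2_eq_square algebra_simps)
  finally show ?thesis by (rule power2_le_imp_le) (simp add: cnorm_nonneg)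
qed

lemma parallelogram_law:
  "(cnorm (x - y))\<^sup>2 + (cnorm (x + y))\<^sup>2 = 2 * (cnorm x)\<^sup>2 + 2 * (cnorm y)\<^sup>2"
  by (simp add: cnorm_power2 cinner_add_left cinner_add_right cinner_diff_left cinner_diff_right)

lemma chilbert_Cauchy_convergent:
  fixes X :: "nat \<Rightarrow> 'a::chilbert_space"
  assumes "\<forall>e>0. \<exists>N. \<forall>m\<ge>N. \<forall>n\<ge>N. cnorm (X m - X n) < e"
  shows "\<exists>L. \<forall>e>0. \<exists>N. \<forall>n\<ge>N. cnorm (X n - L) < e"
  using cauchy_complete[of X] assms unfolding cnorm_def by blast

section \<open>The Riesz representation theorem\<close>

definition bounded_functional :: "('a::chilbert_space \<Rightarrow> complex) \<Rightarrow> bool" where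
  "bounded_functional g \<longleftrightarrow> (\<forall>x y. g (x + y) = g x + g y) \<and> (\<forall>c x. g (scaleC c x) = c * g x)
     \<and> (\<exists>K. \<forall>x. cmod (g x) \<le> K * cnorm x)"

lemma bounded_functional_linear:
  assumes "bounded_functional g"
  shows "g (x + y) = g x + g y" "g (scaleC c x) = c * g x" "g 0 = 0" "g (x - y) = g x - g y"
proof -
  have add: "g (x + y) = g x + g y" and hom: "g (scaleC c x) = c * g x" for x y c
    using assms unfolding bounded_functional_def by auto
  show "g (x + y) = g x + g y" "g (scaleC c x) = c * g x" by (fact add, fact hom)
  show "g 0 = 0" using hom[of 0 0] by simp
  show "g (x - y) = g x - g y"
    using add[of x "- y"] hom[of "- 1" y] by (simp add: scaleC_minus1)
qed

lemma bounded_functional_bound: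
  assumes "bounded_functional g"
  obtains K where "K > 0" "\<And>x. cmod (g x) \<le> K * cnorm x"
proof -
  obtain K where K: "\<And>x. cmod (g x) \<le> K * cnorm x"
    using assms unfolding bounded_functional_def by blast
  have "cmod (g x) \<le> (\<bar>K\<bar> + 1) * cnorm x" for x
  proof -
    have "K * cnorm x \<le> (\<bar>K\<bar> + 1) * cnorm x"
      by (rule mult_right_mono) (simp_all add: cnorm_nonneg)
    thus ?thesis using K[of x] by linarith
  qed
  thus ?thesis using that[of "\<bar>K\<bar> + 1"] by simp
qed

lemma bounded_functional_kernel_closed:
  fixes X :: "nat \<Rightarrow> 'a::chilbert_space"
  assumes g: "bounded_functional g" and zero: "\<And>n. g (X n) = 0"
    and lim: "\<forall>e>0. \<exists>N. \<forall>n\<ge>N. cnorm (X n - L) < e"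
  shows "g L = 0"
proof (rule ccontr)
  assume "g L \<noteq> 0"
  obtain K where K: "K > 0" "\<And>x. cmod (g x) \<le> K * cnorm x"
    using bounded_functional_bound[OF g] by blast
  have "cmod (g L) / K > 0" using \<open>g L \<noteq> 0\<close> K(1) by simp
  then obtain N where N: "cnorm (X N - L) < cmod (g L) / K" using lim by blast
  have "g (L - X N) = g L"
    by (simp add: bounded_functional_linear[OF g] zero)
  hence "cmod (g L) \<le> K * cnorm (X N - L)"
    using K(2)[of "L - X N"] cnorm_minus_commute[of L "X N"] by simp
  also have "\<dots> < K * (cmod (g L) / K)" using N K(1) by (rule mult_strict_left_mono)
  finally show False using K(1) by simp
qed

lemma minimizing_sequence_Cauchy:
  fixes x :: "'a::complex_inner_space" and X :: "nat \<Rightarrow> 'a"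
  assumes midpoint: "\<And>k l. k \<in> K \<Longrightarrow> l \<in> K \<Longrightarrow> scaleC (1/2) (k + l) \<in> K"
    and lower: "\<And>k. k \<in> K \<Longrightarrow> d \<le> (cnorm (x - k))\<^sup>2"
    and mem: "\<And>n. X n \<in> K" and approx: "\<And>n. (cnorm (x - X n))\<^sup>2 < d + 1 / (real n + 1)"
  shows "\<forall>e>0. \<exists>N. \<forall>m\<ge>N. \<forall>n\<ge>N. cnorm (X m - X n) < e"
proof (intro allI impI)
  fix e :: real assume e: "e > 0"
  have dist: "(cnorm (X m - X n))\<^sup>2 \<le> 2 * (cnorm (x - X m))\<^sup>2 + 2 * (cnorm (x - X n))\<^sup>2 - 4 * d"
    for m n
  proof -
    define c where "c = scaleC (1/2) (X m + X n)"
    have "(x - X n) + (x - X m) = scaleC 2 (x - c)"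
      by (simp add: c_def scaleC_one scaleC_2 scaleC_diff_right scaleC_scaleC algebra_simps)
    hence "(cnorm (X m - X n))\<^sup>2 + 4 * (cnorm (x - c))\<^sup>2
        = 2 * (cnorm (x - X n))\<^sup>2 + 2 * (cnorm (x - X m))\<^sup>2"
      using parallelogram_law[of "x - X n" "x - X m"]
      by (simp add: cnorm_scaleC power_mult_distrib)
    moreover have "d \<le> (cnorm (x - c))\<^sup>2" unfolding c_def using midpoint mem lower by blast
    ultimately show ?thesis by linarith
  qed
  obtain N where N: "inverse (real (Suc N)) < e\<^sup>2 / 4"
    using reals_Archimedean[of "e\<^sup>2 / 4"] e by auto
  have "cnorm (X m - X n) < e" if "m \<ge> N" "n \<ge> N" for m n
  proof -
    have "1 / (real m + 1) \<le> inverse (real (Suc N))" "1 / (real n + 1) \<le> inverse (real (Suc N))"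
      using that by (simp_all add: inverse_eq_divide frac_le)
    hence "(cnorm (X m - X n))\<^sup>2 < e\<^sup>2"
      using dist[of m n] approx[of m] approx[of n] N by linarith
    thus ?thesis using e by (simp add: power_less_imp_less_base)
  qed
  thus "\<exists>N. \<forall>m\<ge>N. \<forall>n\<ge>N. cnorm (X m - X n) < e" by blast
qed

lemma minimizing_sequence_limit:
  fixes x :: "'a::complex_inner_space" and X :: "nat \<Rightarrow> 'a"
  assumes lim: "\<forall>e>0. \<exists>N. \<forall>n\<ge>N. cnorm (X n - L) < e"
    and approx: "\<And>n. (cnorm (x - X n))\<^sup>2 < d + 1 / (real n + 1)" and d: "0 \<le> d"
  shows "(cnorm (x - L))\<^sup>2 \<le> d"
proof -
  have "cnorm (x - L) \<le> sqrt d + e" if e: "e > 0" for e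
  proof -
    obtain N1 where N1: "\<forall>n\<ge>N1. cnorm (X n - L) < e / 2" using lim e by (meson half_gt_zero)
    obtain N2 where N2: "inverse (real (Suc N2)) < (e / 2)\<^sup>2"
      using reals_Archimedean[of "(e / 2)\<^sup>2"] e by auto
    define n where "n = max N1 N2"
    have "1 / (real n + 1) \<le> inverse (real (Suc N2))"
      unfolding n_def by (simp add: inverse_eq_divide frac_le)
    hence "(cnorm (x - X n))\<^sup>2 < d + (e / 2)\<^sup>2" using approx[of n] N2 by linarith
    hence "cnorm (x - X n) \<le> sqrt (d + (e / 2)\<^sup>2)" by (simp add: cnorm_nonneg real_le_rsqrt)
    also have "\<dots> \<le> sqrt d + e / 2" using sqrt_add_le_add_sqrt[of d "(e / 2)\<^sup>2"] d e by simp
    finally have "cnorm (x - X n) \<le> sqrt d + e / 2" .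
    moreover have "cnorm (X n - L) < e / 2" using N1 n_def by simp
    moreover have "cnorm (x - L) \<le> cnorm (x - X n) + cnorm (X n - L)"
      using cnorm_triangle[of "x - X n" "X n - L"] by simp
    ultimately show ?thesis by linarith
  qed
  hence "cnorm (x - L) \<le> sqrt d" by (rule field_le_epsilon)
  thus ?thesis using d by (metis cnorm_nonneg power_mono real_sqrt_pow2)
qed

lemma nearest_point_in_kernel:
  fixes g :: "'a::chilbert_space \<Rightarrow> complex"
  assumes g: "bounded_functional g"
  obtains L where "g L = 0" "\<And>k. g k = 0 \<Longrightarrow> cnorm (x - L) \<le> cnorm (x - k)"
proof -
  note lin = bounded_functional_linear[OF g]
  define h where "h k = (cnorm (x - k))\<^sup>2" for k
  define d where "d = Inf (h ` {k. g k = 0})"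
  have bdd: "bdd_below (h ` {k. g k = 0})"
    by (rule bdd_belowI[of _ 0]) (auto simp: h_def)
  have lower: "d \<le> h k" if "g k = 0" for k
    unfolding d_def using bdd that by (simp add: cInf_lower)
  have d: "0 \<le> d"
    unfolding d_def using lin(3) by (intro cInf_greatest) (auto simp: h_def)
  have "\<exists>k. g k = 0 \<and> h k < d + 1 / (real n + 1)" for n
    using cInf_lessD[of "h ` {k. g k = 0}" "d + 1 / (real n + 1)"] lin(3)
    unfolding d_def by fastforce
  then obtain X where X: "\<And>n. g (X n) = 0" "\<And>n. h (X n) < d + 1 / (real n + 1)"
    by metis
  have "\<forall>e>0. \<exists>N. \<forall>m\<ge>N. \<forall>n\<ge>N. cnorm (X m - X n) < e"
    by (rule minimizing_sequence_Cauchy[where K = "{k. g k = 0}" and d = d and x = x])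
      (use X lower lin in \<open>auto simp: h_def\<close>)
  then obtain L where L: "\<forall>e>0. \<exists>N. \<forall>n\<ge>N. cnorm (X n - L) < e"
    using chilbert_Cauchy_convergent by blast
  have "h L \<le> d"
    unfolding h_def by (rule minimizing_sequence_limit[OF L _ d]) (use X(2) h_def in simp)
  hence "cnorm (x - L) \<le> cnorm (x - k)" if "g k = 0" for k
    using lower[OF that] unfolding h_def by (metis cnorm_nonneg order.trans power2_le_imp_le)
  moreover have "g L = 0" by (rule bounded_functional_kernel_closed[OF g X(1) L])
  ultimately show ?thesis using that by blast
qed

lemma nearest_point_orthogonal:
  fixes x :: "'a::complex_inner_space"
  assumes subspace: "\<And>k l. k \<in> K \<Longrightarrow> l \<in> K \<Longrightarrow> k + l \<in> K" "\<And>c k. k \<in> K \<Longrightarrow> scaleC c k \<in> K"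
    and L: "L \<in> K" and nearest: "\<And>k. k \<in> K \<Longrightarrow> cnorm (x - L) \<le> cnorm (x - k)"
    and k: "k \<in> K"
  shows "cinner (x - L) k = 0"
proof (rule ccontr)
  define w where "w = x - L"
  define a where "a = cinner w k"
  define r where "r = Re (cinner k k)"
  have kk: "cinner k k = complex_of_real r" unfolding r_def by (rule cinner_self_real)
  assume "cinner (x - L) k \<noteq> 0"
  hence a: "(cmod a)\<^sup>2 > 0" unfolding a_def w_def by simp
  define s where "s = 1 / (r + 1)"
  have s: "s > 0" "s * r < 1"
    unfolding s_def using cinner_self_Re_nonneg[of k] r_def by (simp_all add: field_simps)
  \<comment> \<open>moving from \<open>L\<close> a small step towards \<open>k\<close> would decrease the distance to \<open>x\<close>\<close>
  define t where "t = complex_of_real s * cnj a"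
  have "cnorm (x - L) \<le> cnorm (x - (L + scaleC t k))"
    using subspace L k by (intro nearest) auto
  hence "(cnorm w)\<^sup>2 \<le> (cnorm (w - scaleC t k))\<^sup>2"
    unfolding w_def by (simp add: diff_diff_eq cnorm_nonneg power_mono)
  hence le: "Re (cinner w w) \<le> Re (cinner (w - scaleC t k) (w - scaleC t k))"
    by (simp only: cnorm_power2)
  have "cinner (w - scaleC t k) (w - scaleC t k)
      = cinner w w - t * a - cnj t * cnj a + cnj t * t * cinner k k"
    by (simp add: cinner_diff_left cinner_diff_right cinner_scaleC_left cinner_scaleC_right
        cinner_commute[of k w] a_def algebra_simps)
  also have "\<dots> = cinner w w - complex_of_real (s * (cmod a)\<^sup>2 * (2 - s * r))"
    unfolding t_def kk using complex_norm_square[of a]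
    by (simp add: algebra_simps power2_eq_square)
  finally have "0 \<le> - (s * (cmod a)\<^sup>2 * (2 - s * r))" using le by simp
  moreover have "0 < s * (cmod a)\<^sup>2 * (2 - s * r)" using s a by simp
  ultimately show False by linarith
qed

theorem Riesz_representation:
  assumes g: "bounded_functional g"
  obtains z where "\<And>x. g x = cinner z x"
proof (cases "\<forall>x. g x = 0")
  case True thus ?thesis using that[of 0] by simp
next
  case False
  then obtain x where gx: "g x \<noteq> 0" by blast
  note lin = bounded_functional_linear[OF g]
  obtain L where L: "g L = 0" "\<And>k. g k = 0 \<Longrightarrow> cnorm (x - L) \<le> cnorm (x - k)"
    using nearest_point_in_kernel[OF g, of x] by blast
  define w where "w = x - L"
  have orth: "cinner w k = 0" if "g k = 0" for k
    unfolding w_def by (rule nearest_point_orthogonal[where K = "{k. g k = 0}"]) (use L that lin in auto)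
  have "g w \<noteq> 0" unfolding w_def using lin L gx by simp
  hence ww: "cinner w w \<noteq> 0" using lin cinner_self_eq_zero_iff by metis
  \<comment> \<open>\<open>g y \<cdot> w - g w \<cdot> y\<close> lies in the kernel, so it is orthogonal to \<open>w\<close>\<close>
  have "g y = cinner (scaleC (cnj (g w / cinner w w)) w) y" for y
  proof -
    have "cinner w (scaleC (g y) w - scaleC (g w) y) = 0"
      by (rule orth) (simp add: lin mult.commute)
    hence "g y * cinner w w = g w * cinner w y"
      by (simp add: cinner_diff_right cinner_scaleC_right)
    thus ?thesis using ww by (simp add: cinner_scaleC_left field_simps)
  qed
  thus ?thesis by (rule that)
qed

lemma bounded_op_add: "bounded_op A \<Longrightarrow> A (x + y) = A x + A y"
  and bounded_op_scaleC: "bounded_op A \<Longrightarrow> A (scaleC c x) = scaleC c (A x)"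
  unfolding bounded_op_def by auto

lemma bounded_op_bound:
  assumes "bounded_op A"
  obtains K where "K \<ge> 0" "\<And>x. cnorm (A x) \<le> K * cnorm x"
proof -
  obtain K where K: "\<And>x. cnorm (A x) \<le> K * cnorm x"
    using assms unfolding bounded_op_def by blast
  have "cnorm (A x) \<le> \<bar>K\<bar> * cnorm x" for x
    using K[of x] mult_right_mono[OF abs_ge_self cnorm_nonneg, of K x] by linarith
  thus ?thesis using that[of "\<bar>K\<bar>"] by simp
qed

lemma bounded_functional_inner_bounded_op:
  assumes "bounded_op A"
  shows "bounded_functional (\<lambda>x. cinner y (A x))"
proof -
  obtain K where K: "K \<ge> 0" "\<And>x. cnorm (A x) \<le> K * cnorm x"
    using bounded_op_bound[OF assms] by blast
  have "cmod (cinner y (A x)) \<le> (cnorm y * K) * cnorm x" for x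
  proof -
    have "cmod (cinner y (A x)) \<le> cnorm y * cnorm (A x)" by (rule Cauchy_Schwarz)
    also have "\<dots> \<le> cnorm y * (K * cnorm x)" using K by (simp add: cnorm_nonneg mult_left_mono)
    finally show ?thesis by (simp add: mult.assoc)
  qed
  thus ?thesis using assms unfolding bounded_functional_def
    by (auto simp: bounded_op_add bounded_op_scaleC cinner_add_right cinner_scaleC_right)
qed

lemma adj_eqI:
  assumes "\<And>x y. cinner (A x) y = cinner x (B y)"
  shows "adj A = B"
  unfolding adj_def
proof (rule the_equality)
  fix C assume "\<forall>x y. cinner (A x) y = cinner x (C y)"
  thus "C = B" using assms by (intro ext cinner_ext) metis
qed (use assms in blast)

lemma adj_inner:
  assumes "bounded_op A"
  shows "cinner (A x) y = cinner x (adj A y)"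
proof -
  have "\<exists>z. \<forall>x. cinner y (A x) = cinner z x" for y
    using Riesz_representation[OF bounded_functional_inner_bounded_op[OF assms]] by metis
  then obtain B where B: "\<And>y x. cinner y (A x) = cinner (B y) x" by metis
  have "cinner (A x) y = cinner x (B y)" for x y
    using B[of y x] by (metis cinner_commute)
  thus ?thesis using adj_eqI by metis
qed

lemma adj_inner_left: "bounded_op A \<Longrightarrow> cinner (adj A x) y = cinner x (A y)"
  by (metis adj_inner cinner_commute)

lemma bounded_op_adj:
  assumes bA: "bounded_op A"
  shows "bounded_op (adj A)"
proof -
  obtain K where K: "K \<ge> 0" "\<And>x. cnorm (A x) \<le> K * cnorm x"
    using bounded_op_bound[OF bA] by blast
  have add: "adj A (y + z) = adj A y + adj A z" for y z
    by (rule cinner_ext) (simp add: adj_inner[OF bA, symmetric] cinner_add_right)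
  have hom: "adj A (scaleC c y) = scaleC c (adj A y)" for c y
    by (rule cinner_ext) (simp add: adj_inner[OF bA, symmetric] cinner_scaleC_right)
  have "cnorm (adj A y) \<le> K * cnorm y" for y
  proof (cases "cnorm (adj A y) = 0")
    case True thus ?thesis using K(1) by (simp add: cnorm_nonneg)
  next
    case False
    hence pos: "cnorm (adj A y) > 0" using cnorm_nonneg[of "adj A y"] by linarith
    have "(cnorm (adj A y))\<^sup>2 = Re (cinner (A (adj A y)) y)"
      by (simp add: cnorm_power2 adj_inner[OF bA])
    also have "\<dots> \<le> cnorm (A (adj A y)) * cnorm y"
      using complex_Re_le_cmod Cauchy_Schwarz order_trans by blast
    also have "\<dots> \<le> K * cnorm (adj A y) * cnorm y"
      using K(2) by (simp add: cnorm_nonneg mult_right_mono)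
    finally show ?thesis using pos by (simp add: power2_eq_square mult.assoc)
  qed
  thus ?thesis unfolding bounded_op_def using add hom by blast
qed

lemma bounded_op_id: "bounded_op id"
  unfolding bounded_op_def by (auto intro: exI[of _ 1])

lemma bounded_op_zero: "bounded_op op_zero"
  unfolding bounded_op_def op_zero_def by (auto intro: exI[of _ 0])

lemma bounded_op_scale:
  assumes "bounded_op A"
  shows "bounded_op (op_scale c A)"
proof -
  obtain K where K: "K \<ge> 0" "\<And>x. cnorm (A x) \<le> K * cnorm x"
    using bounded_op_bound[OF assms] by blast
  have "cnorm (scaleC c (A x)) \<le> (cmod c * K) * cnorm x" for x
    using K(2)[of x] by (simp add: cnorm_scaleC mult.assoc mult_left_mono)
  moreover have "scaleC c (scaleC d x) = scaleC d (scaleC c x)" for d and x :: 'a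
    by (simp add: scaleC_scaleC mult.commute)
  ultimately show ?thesis unfolding bounded_op_def op_scale_def using assms
    by (auto simp: bounded_op_add bounded_op_scaleC scaleC_add_right)
qed

lemma bounded_op_plus:
  assumes "bounded_op A" "bounded_op B"
  shows "bounded_op (op_plus A B)"
proof -
  obtain K1 K2 where "\<And>x. cnorm (A x) \<le> K1 * cnorm x" "\<And>x. cnorm (B x) \<le> K2 * cnorm x"
    using assms unfolding bounded_op_def by metis
  hence "cnorm (A x + B x) \<le> (K1 + K2) * cnorm x" for x
    using cnorm_triangle[of "A x" "B x"] by (simp add: distrib_right add_mono order_trans)
  hence "\<exists>K. \<forall>x. cnorm (op_plus A B x) \<le> K * cnorm x" unfolding op_plus_def by blast
  thus ?thesis unfolding bounded_op_def using assms
    by (auto simp: op_plus_def bounded_op_add bounded_op_scaleC scaleC_add_right algebra_simps)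
qed

lemma bounded_op_uminus: "bounded_op A \<Longrightarrow> bounded_op (\<lambda>x. - A x)"
  using bounded_op_scale[of A "- 1"] by (simp add: op_scale_def scaleC_minus1)

lemma bounded_op_minus_op: "bounded_op A \<Longrightarrow> bounded_op B \<Longrightarrow> bounded_op (op_minus A B)"
  using bounded_op_plus[of A "\<lambda>x. - B x"] bounded_op_uminus[of B]
  by (simp add: op_plus_def op_minus_def)

lemma bounded_op_comp:
  assumes "bounded_op A" "bounded_op B"
  shows "bounded_op (A \<circ> B)"
proof -
  obtain K1 where K1: "K1 \<ge> 0" "\<And>x. cnorm (A x) \<le> K1 * cnorm x"
    using bounded_op_bound[OF assms(1)] by blast
  obtain K2 where K2: "\<And>x. cnorm (B x) \<le> K2 * cnorm x"
    using assms(2) unfolding bounded_op_def by blast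
  have "cnorm (A (B x)) \<le> (K1 * K2) * cnorm x" for x
    using K1(2)[of "B x"] mult_left_mono[OF K2[of x] K1(1)] by (simp add: mult.assoc)
  thus ?thesis unfolding bounded_op_def using assms by (auto simp: bounded_op_add bounded_op_scaleC)
qed

typedef (overloaded) ('h::chilbert_space) bop = "{A::'h op. bounded_op A}"
  using bounded_op_id by blast

setup_lifting type_definition_bop

lemma bounded_op_Rep_bop: "bounded_op (Rep_bop a)"
  using Rep_bop[of a] by simp

instantiation bop :: (chilbert_space) "{real_algebra, monoid_mult}"
begin

lift_definition zero_bop :: "'a bop" is op_zero by (rule bounded_op_zero)
lift_definition one_bop :: "'a bop" is id by (rule bounded_op_id)
lift_definition plus_bop :: "'a bop \<Rightarrow> 'a bop \<Rightarrow> 'a bop" is op_plus by (rule bounded_op_plus)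
lift_definition minus_bop :: "'a bop \<Rightarrow> 'a bop \<Rightarrow> 'a bop" is op_minus by (rule bounded_op_minus_op)
lift_definition uminus_bop :: "'a bop \<Rightarrow> 'a bop" is "\<lambda>A x. - A x" by (rule bounded_op_uminus)
lift_definition times_bop :: "'a bop \<Rightarrow> 'a bop \<Rightarrow> 'a bop" is "(\<circ>)" by (rule bounded_op_comp)
lift_definition scaleR_bop :: "real \<Rightarrow> 'a bop \<Rightarrow> 'a bop" is "\<lambda>r. op_scale (complex_of_real r)"
  by (rule bounded_op_scale)

instance
proof
  fix a b c :: "'a bop" and r s :: real
  show "a + b + c = a + (b + c)" by transfer (auto simp: op_plus_def add.assoc)
  show "a + b = b + a" by transfer (auto simp: op_plus_def add.commute)
  show "0 + a = a" by transfer (auto simp: op_plus_def op_zero_def)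
  show "- a + a = 0" by transfer (auto simp: op_plus_def op_zero_def)
  show "a - b = a + - b" by transfer (auto simp: op_plus_def op_minus_def)
  show "a * b * c = a * (b * c)" by transfer auto
  show "(a + b) * c = a * c + b * c" by transfer (auto simp: op_plus_def)
  show "a * (b + c) = a * b + a * c" by transfer (auto simp: op_plus_def bounded_op_add)
  show "r *\<^sub>R (a + b) = r *\<^sub>R a + r *\<^sub>R b"
    by transfer (auto simp: op_plus_def op_scale_def scaleC_add_right)
  show "(r + s) *\<^sub>R a = r *\<^sub>R a + s *\<^sub>R a"
    by transfer (auto simp: op_plus_def op_scale_def scaleC_add_left)
  show "r *\<^sub>R s *\<^sub>R a = (r * s) *\<^sub>R a" by transfer (auto simp: op_scale_def scaleC_scaleC)
  show "1 *\<^sub>R a = a" by transfer (auto simp: op_scale_def scaleC_one)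
  show "r *\<^sub>R a * b = r *\<^sub>R (a * b)" by transfer (auto simp: op_scale_def)
  show "a * r *\<^sub>R b = r *\<^sub>R (a * b)" by transfer (auto simp: op_scale_def bounded_op_scaleC)
  show "1 * a = a" by transfer auto
  show "a * 1 = a" by transfer auto
qed

end

lift_definition star :: "'a::chilbert_space bop \<Rightarrow> 'a bop" is adj by (rule bounded_op_adj)

lift_definition cscale :: "complex \<Rightarrow> 'a::chilbert_space bop \<Rightarrow> 'a bop" is op_scale
  by (rule bounded_op_scale)

lemma Rep_bop_apply:
  "Rep_bop (a + b) x = Rep_bop a x + Rep_bop b x" "Rep_bop (a - b) x = Rep_bop a x - Rep_bop b x"
  "Rep_bop (- a) x = - Rep_bop a x" "Rep_bop (a * b) x = Rep_bop a (Rep_bop b x)"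
  "Rep_bop 1 x = x" "Rep_bop (r *\<^sub>R a) x = scaleC (complex_of_real r) (Rep_bop a x)"
  "Rep_bop (cscale c a) x = scaleC c (Rep_bop a x)"
  by (simp_all add: plus_bop.rep_eq minus_bop.rep_eq uminus_bop.rep_eq times_bop.rep_eq
      one_bop.rep_eq scaleR_bop.rep_eq cscale.rep_eq op_plus_def op_minus_def op_scale_def)

lemma cinner_star: "cinner (Rep_bop a x) y = cinner x (Rep_bop (star a) y)"
  by (simp add: star.rep_eq adj_inner bounded_op_Rep_bop)

lemma star_eqI: "(\<And>x y. cinner (Rep_bop a x) y = cinner x (Rep_bop b y)) \<Longrightarrow> star a = b"
  by (metis adj_eqI Rep_bop_inject star.rep_eq)

lemma star_add: "star (a + b) = star a + star b"
  by (rule star_eqI) (simp add: Rep_bop_apply cinner_add_left cinner_add_right cinner_star)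

lemma star_diff: "star (a - b) = star a - star b"
  by (rule star_eqI) (simp add: Rep_bop_apply cinner_diff_left cinner_diff_right cinner_star)

lemma star_mult: "star (a * b) = star b * star a"
  by (rule star_eqI) (simp add: Rep_bop_apply cinner_star)

lemma star_one: "star 1 = 1"
  by (rule star_eqI) (simp add: Rep_bop_apply)

lemma star_scaleR: "star (r *\<^sub>R a) = r *\<^sub>R star a"
  by (rule star_eqI) (simp add: Rep_bop_apply cinner_scaleC_left cinner_scaleC_right cinner_star)

lemma star_cscale: "star (cscale c a) = cscale (cnj c) (star a)"
  by (rule star_eqI) (simp add: Rep_bop_apply cinner_scaleC_left cinner_scaleC_right cinner_star)

lemma cscale_mult_left: "cscale c a * b = cscale c (a * b)"
  and cscale_mult_right: "a * cscale c b = cscale c (a * b)"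
  and cscale_cscale: "cscale c (cscale d a) = cscale (c * d) a"
  and cscale_add: "cscale c (a + b) = cscale c a + cscale c b"
  and scaleR_eq_cscale: "r *\<^sub>R a = cscale (complex_of_real r) a"
  and uminus_eq_cscale: "- a = cscale (- 1) a"
  by (transfer; auto simp: op_scale_def op_plus_def bounded_op_scaleC scaleC_scaleC scaleC_minus1
      scaleC_add_right)+

definition nonneg_bop :: "'a::chilbert_space bop \<Rightarrow> bool" where
  "nonneg_bop a \<longleftrightarrow> (\<forall>x. Im (cinner x (Rep_bop a x)) = 0 \<and> 0 \<le> Re (cinner x (Rep_bop a x)))"

lemma nonneg_bop_star_mult: "nonneg_bop (star b * a * b)" if "nonneg_bop a"
  using that unfolding nonneg_bop_def by (simp add: Rep_bop_apply cinner_star[symmetric])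

lemma nonneg_bop_add: "nonneg_bop a \<Longrightarrow> nonneg_bop b \<Longrightarrow> nonneg_bop (a + b)"
  unfolding nonneg_bop_def by (simp add: Rep_bop_apply cinner_add_right)

lemma nonneg_bop_scaleR: "nonneg_bop a \<Longrightarrow> r \<ge> 0 \<Longrightarrow> nonneg_bop (r *\<^sub>R a)"
  unfolding nonneg_bop_def by (simp add: Rep_bop_apply cinner_scaleC_right)

lemma nonneg_bop_one: "nonneg_bop 1"
  unfolding nonneg_bop_def by (simp add: Rep_bop_apply cinner_self_Re_nonneg)

definition is_projection :: "'a::chilbert_space bop \<Rightarrow> bool" where
  "is_projection p \<longleftrightarrow> star p = p \<and> p * p = p"

lemma projection_Abs_bop:
  assumes "projection E"
  shows "Rep_bop (Abs_bop E) = E" "is_projection (Abs_bop E)"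
proof -
  have "bounded_op E" "adj E = E" "E \<circ> E = E"
    using assms unfolding projection_def self_adjoint_def by auto
  thus E: "Rep_bop (Abs_bop E) = E" by (simp add: Abs_bop_inverse)
  with \<open>adj E = E\<close> \<open>E \<circ> E = E\<close> show "is_projection (Abs_bop E)"
    unfolding is_projection_def by (simp add: Rep_bop_inject[symmetric] star.rep_eq times_bop.rep_eq)
qed

lemma nonneg_bop_projection: "is_projection p \<Longrightarrow> nonneg_bop p"
  and nonneg_bop_one_minus_projection: "is_projection p \<Longrightarrow> nonneg_bop (1 - p)"
  using nonneg_bop_star_mult[OF nonneg_bop_one, of p] nonneg_bop_star_mult[OF nonneg_bop_one, of "1 - p"]
  by (simp_all add: is_projection_def star_diff star_one algebra_simps)

lemma sa_contraction_Rep_bop: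
  assumes "star a = a" "nonneg_bop (a + 1)" "nonneg_bop (1 - a)"
  shows "sa_contraction (Rep_bop a)"
  using assms bounded_op_Rep_bop[of a]
  unfolding sa_contraction_def self_adjoint_def op_le_def nonneg_bop_def
  by (simp add: star.rep_eq[symmetric] Rep_bop_apply op_scale_def scaleC_minus1)

section \<open>Polynomial identities\<close>

text \<open>Polynomials of degree at most 4 in one element, by their coefficients, so that products of
  such polynomials can be computed on the coefficients.\<close>
definition poly4 :: "'a::{real_algebra,monoid_mult} \<Rightarrow> real \<Rightarrow> real \<Rightarrow> real \<Rightarrow> real \<Rightarrow> real \<Rightarrow> 'a" where
  "poly4 t a0 a1 a2 a3 a4 = a0 *\<^sub>R 1 + a1 *\<^sub>R t + a2 *\<^sub>R (t * t) + a3 *\<^sub>R (t * t * t) + a4 *\<^sub>R (t * t * t * t)"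

lemma poly4_scaleR: "r *\<^sub>R poly4 t a0 a1 a2 a3 a4 = poly4 t (r*a0) (r*a1) (r*a2) (r*a3) (r*a4)"
  and poly4_add:
    "poly4 t a0 a1 a2 a3 a4 + poly4 t b0 b1 b2 b3 b4 = poly4 t (a0+b0) (a1+b1) (a2+b2) (a3+b3) (a4+b4)"
  and poly4_diff:
    "poly4 t a0 a1 a2 a3 a4 - poly4 t b0 b1 b2 b3 b4 = poly4 t (a0-b0) (a1-b1) (a2-b2) (a3-b3) (a4-b4)"
  and poly4_mult: "poly4 t a0 a1 a2 0 0 * poly4 t b0 b1 b2 0 0 =
    poly4 t (a0*b0) (a0*b1+a1*b0) (a0*b2+a1*b1+a2*b0) (a1*b2+a2*b1) (a2*b2)"
  unfolding poly4_def by (simp_all add: algebra_simps)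

definition bell_poly :: "'a::{real_algebra,monoid_mult} \<Rightarrow> 'a" where
  "bell_poly t = (3/4) *\<^sub>R t - (1/16) *\<^sub>R (t * t * t)"

lemma one_minus_bell_poly:
  "1 - bell_poly t = (1/16) *\<^sub>R ((2 *\<^sub>R 1 - t) * (t + 4 *\<^sub>R 1) * (2 *\<^sub>R 1 - t))"
proof -
  have "2 *\<^sub>R 1 - t = poly4 t 2 (-1) 0 0 0" "t + 4 *\<^sub>R 1 = poly4 t 4 1 0 0 0"
    "1 - bell_poly t = poly4 t 1 (-3/4) 0 (1/16) 0"
    unfolding poly4_def bell_poly_def by (simp_all add: algebra_simps)
  thus ?thesis by (simp add: poly4_mult poly4_scaleR)
qed

lemma one_plus_bell_poly:
  "1 + bell_poly t = (1/16) *\<^sub>R ((2 *\<^sub>R 1 + t) * (4 *\<^sub>R 1 - t) * (2 *\<^sub>R 1 + t))"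
proof -
  have "2 *\<^sub>R 1 + t = poly4 t 2 1 0 0 0" "4 *\<^sub>R 1 - t = poly4 t 4 (-1) 0 0 0"
    "1 + bell_poly t = poly4 t 1 (3/4) 0 (-1/16) 0"
    unfolding poly4_def bell_poly_def by (simp_all add: algebra_simps)
  thus ?thesis by (simp add: poly4_mult poly4_scaleR)
qed

lemma bell_poly_chsh_identity:
  fixes u v :: "'a::{real_algebra,monoid_mult}"
  assumes u: "u * u = 1" and v: "v * v = 1"
  shows "bell_poly (u + v) * (u + v) + bell_poly (u - v) * (u - v)
    = 2 *\<^sub>R 1 + (1/8) *\<^sub>R ((v * u - u * v) * (u * v - v * u))"
proof -
  have u': "u * (u * z) = z" and v': "v * (v * z) = z" for z
    by (metis u v mult.assoc mult_1_left)+
  \<comment> \<open>everything is a polynomial in \<open>X\<close>\<close>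
  define X where "X = u * v + v * u"
  have sum: "(u + v) * (u + v) = poly4 X 2 1 0 0 0"
    and diff: "(u - v) * (u - v) = poly4 X 2 (-1) 0 0 0"
    unfolding poly4_def X_def by (simp_all add: algebra_simps u v scaleR_2)
  have comm: "(v * u - u * v) * (u * v - v * u) = poly4 X 4 0 (-1) 0 0"
    unfolding poly4_def X_def using scaleR_add_left[of 2 2 "1::'a"]
    by (simp add: algebra_simps u' v' scaleR_2 flip: scaleR_add_left) (simp add: u v)
  have cube: "bell_poly s * s = (3/4) *\<^sub>R (s * s) - (1/16) *\<^sub>R ((s * s) * (s * s))" for s :: 'a
    unfolding bell_poly_def by (simp add: algebra_simps)
  have two: "2 *\<^sub>R (1::'a) = poly4 X 2 0 0 0 0" unfolding poly4_def by simp
  show ?thesis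
    unfolding cube sum diff comm two by (simp add: poly4_mult poly4_scaleR poly4_add poly4_diff)
qed

definition reflection :: "'a::{real_algebra,monoid_mult} \<Rightarrow> 'a" where
  "reflection p = 2 *\<^sub>R p - 1"

definition chsh :: "'a::{real_algebra,monoid_mult} \<Rightarrow> 'a \<Rightarrow> 'a \<Rightarrow> 'a \<Rightarrow> 'a" where
  "chsh a1 b1 a2 b2 = a1 * a2 + a1 * b2 + b1 * a2 - b1 * b2"

lemma chsh_commuting:
  assumes "a1 * a2 = a2 * a1" "a1 * b2 = b2 * a1" "b1 * a2 = a2 * b1" "b1 * b2 = b2 * b1"
  shows "chsh a1 b1 a2 b2 = a2 * (a1 + b1) + b2 * (a1 - b1)"
  using assms unfolding chsh_def by (simp add: algebra_simps)

lemma reflection_square: "p * p = p \<Longrightarrow> reflection p * reflection p = 1"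
  unfolding reflection_def by (simp add: algebra_simps scaleR_2)

lemma reflection_commutator:
  "reflection q * reflection p - reflection p * reflection q = 4 *\<^sub>R (q * p - p * q)"
  unfolding reflection_def by (simp add: algebra_simps)

lemma reflection_commute: "p * b = b * p \<Longrightarrow> reflection p * b = b * reflection p"
  unfolding reflection_def by (simp add: algebra_simps)

lemma bell_poly_reflections_identity:
  assumes "is_projection p" "is_projection q"
  shows "bell_poly (reflection p + reflection q) * (reflection p + reflection q)
      + bell_poly (reflection p - reflection q) * (reflection p - reflection q)
    = 2 *\<^sub>R 1 + 2 *\<^sub>R (star (p * q - q * p) * (p * q - q * p))"
proof -
  have "star (p * q - q * p) = q * p - p * q" "p * p = p" "q * q = q"
    using assms unfolding is_projection_def by (simp_all add: star_diff star_mult)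
  thus ?thesis
    using bell_poly_chsh_identity[OF reflection_square[of p] reflection_square[of q]]
    unfolding reflection_commutator by simp
qed

section \<open>States on operator algebras\<close>

lemma affine_nonneg_imp_slope_zero:
  assumes "\<And>s::real. 0 \<le> s * k + c"
  shows "k = 0"
proof (rule ccontr)
  assume "k \<noteq> 0"
  hence "0 \<le> (- (\<bar>c\<bar> + 1) / k) * k + c" using assms by blast
  thus False using \<open>k \<noteq> 0\<close> by simp
qed

lemma nonneg_affine_complex_imp_zero:
  assumes "\<And>t. Im (cnj t * \<alpha> + t * \<beta> + \<gamma>) = 0 \<and> 0 \<le> Re (cnj t * \<alpha> + t * \<beta> + \<gamma>)"
  shows "\<alpha> = 0"
proof -
  have "0 \<le> s * (Re \<alpha> + Re \<beta>) + Re \<gamma>" "0 \<le> s * (Im \<alpha> + Im \<beta>) + Im \<gamma>"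
    "0 \<le> s * (Im \<alpha> - Im \<beta>) + Re \<gamma>" "0 \<le> s * (Re \<beta> - Re \<alpha>) + Im \<gamma>" for s
    using assms[of "complex_of_real s"] assms[of "\<i> * complex_of_real s"]
    by (simp_all add: algebra_simps)
  hence "Re \<alpha> + Re \<beta> = 0" "Im \<alpha> + Im \<beta> = 0" "Im \<alpha> - Im \<beta> = 0" "Re \<beta> - Re \<alpha> = 0"
    by (metis affine_nonneg_imp_slope_zero)+
  thus ?thesis by (simp add: complex_eq_iff)
qed

lemma one_lt_cmod_two_plus_two:
  assumes "Im w = 0" "0 \<le> Re w" "w \<noteq> 0"
  shows "1 < cmod (2 + 2 * w) / 2"
proof -
  have "Re w > 0" using assms by (metis complex_eq_iff less_eq_real_def zero_complex.simps)
  moreover have "2 + 2 * w = complex_of_real (2 + 2 * Re w)" using assms(1) by (simp add: complex_eq_iff)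
  ultimately show ?thesis by (simp only: norm_of_real) simp
qed

locale bop_subalgebra =
  fixes \<A> :: "'h::chilbert_space bop set"
  assumes add_mem: "a \<in> \<A> \<Longrightarrow> b \<in> \<A> \<Longrightarrow> a + b \<in> \<A>"
    and mult_mem: "a \<in> \<A> \<Longrightarrow> b \<in> \<A> \<Longrightarrow> a * b \<in> \<A>"
    and cscale_mem: "a \<in> \<A> \<Longrightarrow> cscale c a \<in> \<A>"
    and one_mem: "1 \<in> \<A>"
begin

lemma scaleR_mem: "a \<in> \<A> \<Longrightarrow> r *\<^sub>R a \<in> \<A>"
  by (simp add: scaleR_eq_cscale cscale_mem)

lemma diff_mem: "a \<in> \<A> \<Longrightarrow> b \<in> \<A> \<Longrightarrow> a - b \<in> \<A>"
  using add_mem[of a "cscale (- 1) b"] cscale_mem[of b "- 1"]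
  by (simp add: uminus_eq_cscale[symmetric])

lemma reflection_mem: "p \<in> \<A> \<Longrightarrow> reflection p \<in> \<A>"
  by (simp add: reflection_def diff_mem scaleR_mem one_mem)

lemma bell_poly_mem: "t \<in> \<A> \<Longrightarrow> bell_poly t \<in> \<A>"
  by (simp add: bell_poly_def diff_mem scaleR_mem mult_mem)

end

locale bop_state = bop_subalgebra +
  fixes \<phi> :: "'h::chilbert_space bop \<Rightarrow> complex"
  assumes star_mem: "a \<in> \<A> \<Longrightarrow> star a \<in> \<A>"
    and add: "a \<in> \<A> \<Longrightarrow> b \<in> \<A> \<Longrightarrow> \<phi> (a + b) = \<phi> a + \<phi> b"
    and cscale: "a \<in> \<A> \<Longrightarrow> \<phi> (cscale c a) = c * \<phi> a"
    and nonneg: "a \<in> \<A> \<Longrightarrow> Im (\<phi> (star a * a)) = 0 \<and> 0 \<le> Re (\<phi> (star a * a))"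
    and one: "\<phi> 1 = 1"
begin

lemma scaleR: "a \<in> \<A> \<Longrightarrow> \<phi> (r *\<^sub>R a) = complex_of_real r * \<phi> a"
  by (simp add: scaleR_eq_cscale cscale)

lemma diff: "a \<in> \<A> \<Longrightarrow> b \<in> \<A> \<Longrightarrow> \<phi> (a - b) = \<phi> a - \<phi> b"
  using add[of a "cscale (- 1) b"] cscale[of b "- 1"] cscale_mem[of b "- 1"]
  by (simp add: uminus_eq_cscale[symmetric])

text \<open>Cauchy--Schwarz for \<open>\<phi>\<close>: the form \<open>t \<mapsto> \<phi> ((t x + z)\<^sup>* (t x + z))\<close> is nonnegative,
  which forces its coefficient of \<open>cnj t\<close> to vanish.\<close>
lemma mult_eq_0_if_square_eq_0:
  assumes x: "x \<in> \<A>" "star x = x" "\<phi> (x * x) = 0" and z: "z \<in> \<A>"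
  shows "\<phi> (x * z) = 0"
proof (rule nonneg_affine_complex_imp_zero)
  fix t
  have "star (cscale t x + z) * (cscale t x + z)
      = cscale (cnj t * t) (x * x) + cscale (cnj t) (x * z) + cscale t (star z * x) + star z * z"
    using x by (simp add: star_add star_cscale algebra_simps cscale_mult_left cscale_mult_right
        cscale_cscale cscale_add mult.commute)
  hence "\<phi> (star (cscale t x + z) * (cscale t x + z))
      = cnj t * \<phi> (x * z) + t * \<phi> (star z * x) + \<phi> (star z * z)"
    using x z by (simp add: add cscale add_mem cscale_mem mult_mem star_mem)
  thus "Im (cnj t * \<phi> (x * z) + t * \<phi> (star z * x) + \<phi> (star z * z)) = 0 \<and>
      0 \<le> Re (cnj t * \<phi> (x * z) + t * \<phi> (star z * x) + \<phi> (star z * z))"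
    using nonneg[of "cscale t x + z"] x z by (simp add: add_mem cscale_mem)
qed

lemma bell_poly_transfer:
  assumes same: "\<And>z. z \<in> \<A> \<Longrightarrow> \<phi> (t' * z) = \<phi> (t * z)" and comm: "t * t' = t' * t"
    and mem: "t \<in> \<A>" "t' \<in> \<A>" "y \<in> \<A>"
  shows "\<phi> (bell_poly t' * y) = \<phi> (bell_poly t * y)"
proof -
  have "\<phi> (t' * (t' * (t' * y))) = \<phi> (t * (t' * (t' * y)))" using same mem by (simp add: mult_mem)
  also have "\<dots> = \<phi> (t' * (t' * (t * y)))" by (metis comm mult.assoc)
  also have "\<dots> = \<phi> (t * (t' * (t * y)))" using same mem by (simp add: mult_mem)
  also have "\<dots> = \<phi> (t' * (t * (t * y)))" by (metis comm mult.assoc)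
  also have "\<dots> = \<phi> (t * (t * (t * y)))" using same mem by (simp add: mult_mem)
  finally have cube: "\<phi> (t' * (t' * (t' * y))) = \<phi> (t * (t * (t * y)))" .
  have "\<phi> (bell_poly r * y) = 3/4 * \<phi> (r * y) - 1/16 * \<phi> (r * (r * (r * y)))" if "r \<in> \<A>" for r
  proof -
    have "bell_poly r * y = (3/4) *\<^sub>R (r * y) - (1/16) *\<^sub>R (r * (r * (r * y)))"
      unfolding bell_poly_def by (simp add: algebra_simps)
    thus ?thesis using that mem by (simp add: diff scaleR scaleR_mem mult_mem)
  qed
  thus ?thesis using cube same[OF mem(3)] mem by simp
qed

lemma EPR_transfer:
  assumes proj: "is_projection p" "is_projection q" "is_projection p'" "is_projection q'"
    and mem: "p \<in> \<A>" "q \<in> \<A>" "p' \<in> \<A>" "q' \<in> \<A>" "z \<in> \<A>"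
    and EPR: "\<phi> ((p - p') * (p - p')) = 0" "\<phi> ((q - q') * (q - q')) = 0"
  shows "\<phi> ((reflection p' + reflection q') * z) = \<phi> ((reflection p + reflection q) * z)"
    and "\<phi> ((reflection p' - reflection q') * z) = \<phi> ((reflection p - reflection q) * z)"
proof -
  have "\<phi> ((p - p') * z) = 0" "\<phi> ((q - q') * z) = 0"
    using proj mem EPR by (auto intro!: mult_eq_0_if_square_eq_0 diff_mem
        simp: is_projection_def star_diff)
  moreover have "(reflection p' + reflection q') * z
      = (reflection p + reflection q) * z - 2 *\<^sub>R ((p - p') * z) - 2 *\<^sub>R ((q - q') * z)"
    "(reflection p' - reflection q') * z
      = (reflection p - reflection q) * z - 2 *\<^sub>R ((p - p') * z) + 2 *\<^sub>R ((q - q') * z)"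
    unfolding reflection_def by (simp_all add: algebra_simps)
  ultimately show "\<phi> ((reflection p' + reflection q') * z) = \<phi> ((reflection p + reflection q) * z)"
    "\<phi> ((reflection p' - reflection q') * z) = \<phi> ((reflection p - reflection q) * z)"
    using mem by (simp_all add: add diff scaleR add_mem diff_mem scaleR_mem mult_mem reflection_mem)
qed

lemma EPR_bell_poly_transfer:
  assumes proj: "is_projection p" "is_projection q" "is_projection p'" "is_projection q'"
    and mem: "p \<in> \<A>" "q \<in> \<A>" "p' \<in> \<A>" "q' \<in> \<A>"
    and comm: "p * p' = p' * p" "q * p' = p' * q" "p * q' = q' * p" "q * q' = q' * q"
    and EPR: "\<phi> ((p - p') * (p - p')) = 0" "\<phi> ((q - q') * (q - q')) = 0"
  shows "\<phi> (bell_poly (reflection p' + reflection q') * (reflection p + reflection q))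
      = \<phi> (bell_poly (reflection p + reflection q) * (reflection p + reflection q))"
    and "\<phi> (bell_poly (reflection p' - reflection q') * (reflection p - reflection q))
      = \<phi> (bell_poly (reflection p - reflection q) * (reflection p - reflection q))"
proof -
  have "(reflection p + reflection q) * (reflection p' + reflection q')
      = (reflection p' + reflection q') * (reflection p + reflection q)"
    "(reflection p - reflection q) * (reflection p' - reflection q')
      = (reflection p' - reflection q') * (reflection p - reflection q)"
    using comm unfolding reflection_def by (simp_all add: algebra_simps)
  with EPR_transfer[OF proj mem _ EPR] mem
  show "\<phi> (bell_poly (reflection p' + reflection q') * (reflection p + reflection q))
      = \<phi> (bell_poly (reflection p + reflection q) * (reflection p + reflection q))"
    "\<phi> (bell_poly (reflection p' - reflection q') * (reflection p - reflection q))
      = \<phi> (bell_poly (reflection p - reflection q) * (reflection p - reflection q))"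
    by (auto intro!: bell_poly_transfer add_mem diff_mem reflection_mem)
qed

lemma chsh_value:
  assumes "bop_subalgebra \<B>" "\<B> \<subseteq> \<A>"
    and proj: "is_projection p" "is_projection q" "is_projection p'" "is_projection q'"
    and mem: "p \<in> \<A>" "q \<in> \<A>" "p' \<in> \<B>" "q' \<in> \<B>"
    and comm: "\<And>b. b \<in> \<B> \<Longrightarrow> p * b = b * p" "\<And>b. b \<in> \<B> \<Longrightarrow> q * b = b * q"
    and EPR: "\<phi> ((p - p') * (p - p')) = 0" "\<phi> ((q - q') * (q - q')) = 0"
  shows "\<phi> (chsh (reflection p) (reflection q)
      (bell_poly (reflection p' + reflection q')) (bell_poly (reflection p' - reflection q')))
    = 2 + 2 * \<phi> (star (p * q - q * p) * (p * q - q * p))"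
proof -
  interpret \<B>: bop_subalgebra \<B> by fact
  define s where "s = reflection p + reflection q"
  define d where "d = reflection p - reflection q"
  define A2 where "A2 = bell_poly (reflection p' + reflection q')"
  define B2 where "B2 = bell_poly (reflection p' - reflection q')"
  define c where "c = p * q - q * p"
  have B: "A2 \<in> \<B>" "B2 \<in> \<B>" unfolding A2_def B2_def using mem
    by (simp_all add: \<B>.add_mem \<B>.diff_mem \<B>.reflection_mem \<B>.bell_poly_mem)
  have A: "p' \<in> \<A>" "q' \<in> \<A>" "s \<in> \<A>" "d \<in> \<A>" "c \<in> \<A>" "A2 \<in> \<A>" "B2 \<in> \<A>"
    using mem B \<open>\<B> \<subseteq> \<A>\<close> unfolding s_def d_def c_def
    by (auto simp: add_mem diff_mem mult_mem reflection_mem)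
  have "chsh (reflection p) (reflection q) A2 B2 = A2 * s + B2 * d"
    unfolding s_def d_def
    by (rule chsh_commuting) (use comm B in \<open>simp_all add: reflection_commute\<close>)
  hence "\<phi> (chsh (reflection p) (reflection q) A2 B2) = \<phi> (bell_poly s * s + bell_poly d * d)"
    using EPR_bell_poly_transfer[OF proj mem(1,2) A(1,2) comm[OF mem(3)] comm[OF mem(4)] EPR] A
    by (auto simp: add mult_mem bell_poly_mem A2_def B2_def s_def d_def)
  also have "bell_poly s * s + bell_poly d * d = 2 *\<^sub>R 1 + 2 *\<^sub>R (star c * c)"
    unfolding s_def d_def c_def using proj(1,2) by (rule bell_poly_reflections_identity)
  also have "\<phi> \<dots> = 2 + 2 * \<phi> (star c * c)"
    using A by (simp add: add scaleR one one_mem scaleR_mem mult_mem star_mem)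
  finally show ?thesis unfolding A2_def B2_def c_def .
qed

lemma chsh_violation:
  assumes "bop_subalgebra \<B>" "\<B> \<subseteq> \<A>"
    and "is_projection p" "is_projection q" "is_projection p'" "is_projection q'"
    and "p \<in> \<A>" "q \<in> \<A>" "p' \<in> \<B>" "q' \<in> \<B>"
    and "\<And>b. b \<in> \<B> \<Longrightarrow> p * b = b * p" "\<And>b. b \<in> \<B> \<Longrightarrow> q * b = b * q"
    and "\<phi> ((p - p') * (p - p')) = 0" "\<phi> ((q - q') * (q - q')) = 0"
    and incommensurable: "\<phi> (star (p * q - q * p) * (p * q - q * p)) \<noteq> 0"
  shows "1 < cmod (\<phi> (chsh (reflection p) (reflection q)
      (bell_poly (reflection p' + reflection q')) (bell_poly (reflection p' - reflection q')))) / 2"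
proof -
  have "\<phi> (chsh (reflection p) (reflection q)
      (bell_poly (reflection p' + reflection q')) (bell_poly (reflection p' - reflection q')))
    = 2 + 2 * \<phi> (star (p * q - q * p) * (p * q - q * p))" (is "_ = 2 + 2 * ?w")
    by (rule chsh_value) (fact assms)+
  moreover have "p * q - q * p \<in> \<A>" using assms(7,8) by (intro diff_mem mult_mem)
  hence "Im ?w = 0" "0 \<le> Re ?w" using nonneg by auto
  ultimately show ?thesis using incommensurable one_lt_cmod_two_plus_two by metis
qed

end

lemma star_reflection: "star p = p \<Longrightarrow> star (reflection p) = reflection p"
  by (simp add: reflection_def star_diff star_scaleR star_one)

lemma sa_contraction_reflection:
  assumes "is_projection p"
  shows "sa_contraction (Rep_bop (reflection p))"
proof (rule sa_contraction_Rep_bop)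
  show "star (reflection p) = reflection p"
    using assms by (simp add: is_projection_def star_reflection)
  have "reflection p + 1 = 2 *\<^sub>R p" "1 - reflection p = 2 *\<^sub>R (1 - p)"
    unfolding reflection_def by (simp_all add: algebra_simps scaleR_2)
  thus "nonneg_bop (reflection p + 1)" "nonneg_bop (1 - reflection p)"
    using assms by (simp_all add: nonneg_bop_scaleR nonneg_bop_projection nonneg_bop_one_minus_projection)
qed

lemma sa_contraction_bell_poly:
  assumes t: "star t = t" and le: "nonneg_bop (4 *\<^sub>R 1 - t)" and ge: "nonneg_bop (t + 4 *\<^sub>R 1)"
  shows "sa_contraction (Rep_bop (bell_poly t))"
proof (rule sa_contraction_Rep_bop)
  show "star (bell_poly t) = bell_poly t"
    using t by (simp add: bell_poly_def star_diff star_scaleR star_mult mult.assoc)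
  have "star (2 *\<^sub>R 1 + t) = 2 *\<^sub>R 1 + t" "star (2 *\<^sub>R 1 - t) = 2 *\<^sub>R 1 - t"
    using t by (simp_all add: star_add star_diff star_scaleR star_one)
  hence "nonneg_bop ((2 *\<^sub>R 1 + t) * (4 *\<^sub>R 1 - t) * (2 *\<^sub>R 1 + t))"
    "nonneg_bop ((2 *\<^sub>R 1 - t) * (t + 4 *\<^sub>R 1) * (2 *\<^sub>R 1 - t))"
    using nonneg_bop_star_mult[OF le, of "2 *\<^sub>R 1 + t"] nonneg_bop_star_mult[OF ge, of "2 *\<^sub>R 1 - t"]
    by simp_all
  thus "nonneg_bop (bell_poly t + 1)" "nonneg_bop (1 - bell_poly t)"
    unfolding add.commute[of "bell_poly t"] one_plus_bell_poly one_minus_bell_poly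
    by (simp_all add: nonneg_bop_scaleR)
qed

lemma sa_contraction_bell_poly_reflections:
  assumes p: "is_projection p" and q: "is_projection q"
  shows "sa_contraction (Rep_bop (bell_poly (reflection p + reflection q)))"
    and "sa_contraction (Rep_bop (bell_poly (reflection p - reflection q)))"
proof -
  have star: "star (reflection p) = reflection p" "star (reflection q) = reflection q"
    using p q by (simp_all add: is_projection_def star_reflection)
  have nonneg: "nonneg_bop (2 *\<^sub>R a + 2 *\<^sub>R b + 2 *\<^sub>R 1)" if "nonneg_bop a" "nonneg_bop b" for a b
    using that by (simp add: nonneg_bop_add nonneg_bop_scaleR nonneg_bop_one)
  have four: "4 *\<^sub>R (1::'a bop) = 2 *\<^sub>R 1 + 2 *\<^sub>R 1" by (simp flip: scaleR_add_left)
  have eqs: "4 *\<^sub>R 1 - (reflection p + reflection q) = 2 *\<^sub>R (1 - p) + 2 *\<^sub>R (1 - q) + 2 *\<^sub>R 1"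
    "reflection p + reflection q + 4 *\<^sub>R 1 = 2 *\<^sub>R p + 2 *\<^sub>R q + 2 *\<^sub>R 1"
    "4 *\<^sub>R 1 - (reflection p - reflection q) = 2 *\<^sub>R (1 - p) + 2 *\<^sub>R q + 2 *\<^sub>R 1"
    "reflection p - reflection q + 4 *\<^sub>R 1 = 2 *\<^sub>R p + 2 *\<^sub>R (1 - q) + 2 *\<^sub>R 1"
    unfolding reflection_def four by (simp_all add: algebra_simps scaleR_2)
  show "sa_contraction (Rep_bop (bell_poly (reflection p + reflection q)))"
    "sa_contraction (Rep_bop (bell_poly (reflection p - reflection q)))"
    by (rule sa_contraction_bell_poly;
        simp add: star star_add star_diff eqs nonneg nonneg_bop_projection
          nonneg_bop_one_minus_projection p q)+
qed

lemma bounded_op_commutant: "B \<in> commutant S \<Longrightarrow> bounded_op B"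
  by (simp add: commutant_def)

lemma Rep_bop_mem_commutant_iff:
  "Rep_bop a \<in> commutant S \<longleftrightarrow> (\<forall>A\<in>S. \<forall>x. A (Rep_bop a x) = Rep_bop a (A x))"
  unfolding commutant_def using bounded_op_Rep_bop[of a] by (auto simp: fun_eq_iff)

lemma bop_subalgebra_commutant:
  assumes "S \<subseteq> Collect bounded_op"
  shows "bop_subalgebra {a. Rep_bop a \<in> commutant S}"
  using assms unfolding bop_subalgebra_def Rep_bop_mem_commutant_iff
  by (auto simp: Rep_bop_apply bounded_op_add bounded_op_scaleC)

lemma adj_mem_commutant:
  assumes S: "\<And>A. A \<in> S \<Longrightarrow> bounded_op A \<and> adj A \<in> S" and B: "B \<in> commutant S"
  shows "adj B \<in> commutant S"
proof -
  have bB: "bounded_op B" using B by (rule bounded_op_commutant)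
  have "adj B \<circ> A = A \<circ> adj B" if A: "A \<in> S" for A
  proof (rule ext, rule cinner_ext)
    fix x y
    have bA: "bounded_op A" and "B (adj A x) = adj A (B x)"
      using B S[OF A] unfolding commutant_def by (auto simp: fun_eq_iff)
    hence "cinner x (adj B (A y)) = cinner (B (adj A x)) y"
      by (simp add: adj_inner[OF bB, symmetric] adj_inner[OF bA, symmetric] adj_inner_left[OF bA])
    also have "\<dots> = cinner x (A (adj B y))"
      by (simp add: adj_inner[OF bB] adj_inner_left[OF bA])
    finally show "cinner x ((adj B \<circ> A) y) = cinner x ((A \<circ> adj B) y)" by simp
  qed
  thus ?thesis using bB by (simp add: commutant_def bounded_op_adj)
qed

lemma von_neumann_algebra_bop_subalgebra:
  assumes "von_neumann_algebra N"
  shows "bop_subalgebra {a. Rep_bop a \<in> N}"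
proof -
  have "N = commutant (commutant N)" using assms unfolding von_neumann_algebra_def by simp
  moreover have "commutant N \<subseteq> Collect bounded_op" by (auto simp: commutant_def)
  ultimately show ?thesis using bop_subalgebra_commutant by metis
qed

lemma subset_vN_join:
  assumes "N1 \<union> N2 \<subseteq> Collect bounded_op"
  shows "N1 \<union> N2 \<subseteq> vN_join N1 N2"
  using assms unfolding vN_join_def commutant_def by auto

lemma normal_state_bop_state:
  assumes "von_neumann_algebra N1" "von_neumann_algebra N2" "normal_state (vN_join N1 N2) \<omega>"
  shows "bop_state {a. Rep_bop a \<in> vN_join N1 N2} (\<lambda>a. \<omega> (Rep_bop a))"
proof (rule bop_state.intro)
  show "bop_subalgebra {a. Rep_bop a \<in> vN_join N1 N2}"
    unfolding vN_join_def by (rule bop_subalgebra_commutant) (auto simp: bounded_op_commutant)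
  have "bounded_op A \<and> adj A \<in> N1 \<union> N2" if "A \<in> N1 \<union> N2" for A
    using assms(1,2) that unfolding von_neumann_algebra_def by auto
  hence "bounded_op B \<and> adj B \<in> commutant (N1 \<union> N2)" if "B \<in> commutant (N1 \<union> N2)" for B
    using that adj_mem_commutant bounded_op_commutant by blast
  hence star: "adj (Rep_bop a) \<in> vN_join N1 N2" if "Rep_bop a \<in> vN_join N1 N2" for a
    using that adj_mem_commutant unfolding vN_join_def by blast
  have "is_state (vN_join N1 N2) \<omega>" using assms(3) by (simp add: normal_state_def)
  thus "bop_state_axioms {a. Rep_bop a \<in> vN_join N1 N2} (\<lambda>a. \<omega> (Rep_bop a))"
    unfolding is_state_def
    by unfold_locales (simp_all add: star plus_bop.rep_eq cscale.rep_eq times_bop.rep_eq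
        star.rep_eq one_bop.rep_eq)
qed

lemma Bell_correlatedI_bop:
  assumes "Rep_bop a1 \<in> N1" "Rep_bop b1 \<in> N1" "Rep_bop a2 \<in> N2" "Rep_bop b2 \<in> N2"
    and "sa_contraction (Rep_bop a1)" "sa_contraction (Rep_bop b1)"
      "sa_contraction (Rep_bop a2)" "sa_contraction (Rep_bop b2)"
    and "cmod (\<omega> (Rep_bop (chsh a1 b1 a2 b2))) / 2 > 1"
  shows "Bell_correlated N1 N2 \<omega>"
proof -
  have "Rep_bop (chsh a1 b1 a2 b2) = op_minus (op_plus (op_plus (Rep_bop a1 \<circ> Rep_bop a2)
      (Rep_bop a1 \<circ> Rep_bop b2)) (Rep_bop b1 \<circ> Rep_bop a2)) (Rep_bop b1 \<circ> Rep_bop b2)"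
    by (simp add: chsh_def plus_bop.rep_eq minus_bop.rep_eq times_bop.rep_eq)
  thus ?thesis using assms unfolding Bell_correlated_def by metis
qed

lemma mult_commute_if_Rep_bop_mem_commutant:
  "Rep_bop a \<in> commutant S \<Longrightarrow> Rep_bop b \<in> S \<Longrightarrow> a * b = b * a"
  unfolding commutant_def by (auto simp: Rep_bop_inject[symmetric] times_bop.rep_eq)

lemma EPR_incommensurable_bop:
  assumes "EPR_incommensurable N1 N2 \<omega>"
  obtains p q p' q' where "is_projection p" "is_projection q" "is_projection p'" "is_projection q'"
    and "Rep_bop p \<in> N1" "Rep_bop q \<in> N1" "Rep_bop p' \<in> N2" "Rep_bop q' \<in> N2"
    and "\<omega> (Rep_bop ((p - p') * (p - p'))) = 0" "\<omega> (Rep_bop ((q - q') * (q - q'))) = 0"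
    and "\<omega> (Rep_bop (star (p * q - q * p) * (p * q - q * p))) \<noteq> 0"
proof -
  obtain E1 F1 E2 F2 where "E1 \<in> N1" "F1 \<in> N1" "E2 \<in> N2" "F2 \<in> N2"
    and proj: "projection E1" "projection F1" "projection E2" "projection F2"
    and "EPR_state_for \<omega> E1 E2" "EPR_state_for \<omega> F1 F2"
    and "\<omega> (abs_sq (commutator E1 F1)) \<noteq> 0"
    using assms unfolding EPR_incommensurable_def by blast
  with projection_Abs_bop[OF proj(1)] projection_Abs_bop[OF proj(2)]
    projection_Abs_bop[OF proj(3)] projection_Abs_bop[OF proj(4)]
  show thesis
    by (intro that[of "Abs_bop E1" "Abs_bop F1" "Abs_bop E2" "Abs_bop F2"])
      (simp_all add: EPR_state_for_def abs_sq_def commutator_def minus_bop.rep_eq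
        times_bop.rep_eq star.rep_eq)
qed

lemma Bell_correlated_reflections:
  assumes "von_neumann_algebra N1" "von_neumann_algebra N2"
    and proj: "is_projection p" "is_projection q" "is_projection p'" "is_projection q'"
    and mem: "Rep_bop p \<in> N1" "Rep_bop q \<in> N1" "Rep_bop p' \<in> N2" "Rep_bop q' \<in> N2"
    and "1 < cmod (\<omega> (Rep_bop (chsh (reflection p) (reflection q)
      (bell_poly (reflection p' + reflection q')) (bell_poly (reflection p' - reflection q'))))) / 2"
  shows "Bell_correlated N1 N2 \<omega>"
proof (rule Bell_correlatedI_bop[OF _ _ _ _ sa_contraction_reflection[OF proj(1)]
      sa_contraction_reflection[OF proj(2)] sa_contraction_bell_poly_reflections[OF proj(3,4)]])
  interpret N1: bop_subalgebra "{a. Rep_bop a \<in> N1}"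
    using assms(1) by (rule von_neumann_algebra_bop_subalgebra)
  interpret N2: bop_subalgebra "{a. Rep_bop a \<in> N2}"
    using assms(2) by (rule von_neumann_algebra_bop_subalgebra)
  show "Rep_bop (reflection p) \<in> N1" "Rep_bop (reflection q) \<in> N1"
    using N1.reflection_mem mem by auto
  show "Rep_bop (bell_poly (reflection p' + reflection q')) \<in> N2"
    "Rep_bop (bell_poly (reflection p' - reflection q')) \<in> N2"
    using N2.bell_poly_mem N2.add_mem N2.diff_mem N2.reflection_mem mem by auto
qed (fact assms(11))

theorem theorem2:
  fixes N1 N2 :: "('h::chilbert_space \<Rightarrow> 'h) set"
    and \<omega> :: "('h \<Rightarrow> 'h) \<Rightarrow> complex"
  assumes "von_neumann_algebra N1"
    and "von_neumann_algebra N2"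
    and "N1 \<subseteq> commutant N2"
    and "normal_state (vN_join N1 N2) \<omega>"
    and "EPR_incommensurable N1 N2 \<omega>"
  shows "Bell_correlated N1 N2 \<omega>"
proof -
  obtain p q p' q' where proj: "is_projection p" "is_projection q" "is_projection p'" "is_projection q'"
    and mem: "Rep_bop p \<in> N1" "Rep_bop q \<in> N1" "Rep_bop p' \<in> N2" "Rep_bop q' \<in> N2"
    and EPR: "\<omega> (Rep_bop ((p - p') * (p - p'))) = 0" "\<omega> (Rep_bop ((q - q') * (q - q'))) = 0"
    and incommensurable: "\<omega> (Rep_bop (star (p * q - q * p) * (p * q - q * p))) \<noteq> 0"
    using EPR_incommensurable_bop[OF assms(5)] by blast
  interpret bop_state "{a. Rep_bop a \<in> vN_join N1 N2}" "\<lambda>a. \<omega> (Rep_bop a)"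
    using assms(1,2,4) by (rule normal_state_bop_state)
  have N2: "bop_subalgebra {a. Rep_bop a \<in> N2}"
    using assms(2) by (rule von_neumann_algebra_bop_subalgebra)
  have "N1 \<union> N2 \<subseteq> vN_join N1 N2"
    using assms(1,2) by (intro subset_vN_join) (auto simp: von_neumann_algebra_def)
  moreover have "a * b = b * a" if "Rep_bop a \<in> N1" "Rep_bop b \<in> N2" for a b
    using that assms(3) by (auto intro: mult_commute_if_Rep_bop_mem_commutant)
  ultimately have "1 < cmod (\<omega> (Rep_bop (chsh (reflection p) (reflection q)
      (bell_poly (reflection p' + reflection q')) (bell_poly (reflection p' - reflection q'))))) / 2"
    using proj mem EPR incommensurable by (intro chsh_violation[OF N2]) auto
  thus ?thesis by (rule Bell_correlated_reflections[OF assms(1,2) proj mem])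
qed

end
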